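(* Let $D$ be a square-free integer with $D\equiv 2\pmod 4$, let $\mathbb{Z}[\sqrt{D}]=\{x+y\sqrt D: x,y\in\mathbb{Z}\}$, and suppose that $2$ is irreducible but not prime in $\mathbb{Z}[\sqrt{D}]$. Let $z=z_1+z_2\sqrt{D}\in I_2(D)$ with $\lVert z\rVert=2k$ for some integer $k\equiv 3\pmod 4$. Then $A(2,z)$ has property (CZ) if and only if the quadratic Diophantine equation $$0=(2+k)b_1^2-(2+k)Db_2^2-2z_1b_1+2z_2Db_2-2$$ has an integer solution $(b_1,b_2)$.
   Context: $\bar z=z_1-z_2\sqrt D$ is the conjugate and $\lVert z\rVert=z\bar z=z_1^2-Dz_2^2$ the norm. $I_2(D)$ is the set of all non-unit $z\in\mathbb{Z}[\sqrt{D}]$ such that $z\notin\langle 2\rangle$ but there exists $m\notin\langle 2\rangle$ with $zm\in\langle 2\rangle$. $A(2,z)=\begin{pmatrix} 2 & z\\ \bar z & \lVert z\rVert/2\end{pmatrix}$. A matrix $A(p,z)$ has property (CZ) if there exist $a,b,c\in\mathbb{Z}[\sqrt{D}]$ with $a(1-a)=bc$ such that $A(p,z)=\begin{pmatrix} a&b\\ c&1-a\end{pmatrix}\begin{pmatrix}\bar a&\bar c\\ \bar b&1-\bar a\end{pmatrix}$. *)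

theory Defs
  imports "HOL-Computational_Algebra.Squarefree"
begin

text \<open>Elements z1 + z2 sqrt D of Z[sqrt D] are represented as pairs (z1, z2) of integers;
  the ring operations depend on the parameter D.\<close>

type_synonym zd = "int \<times> int"

definition zadd :: "zd \<Rightarrow> zd \<Rightarrow> zd" where
  "zadd x y = (fst x + fst y, snd x + snd y)"

definition zsub :: "zd \<Rightarrow> zd \<Rightarrow> zd" where
  "zsub x y = (fst x - fst y, snd x - snd y)"

definition zmul :: "int \<Rightarrow> zd \<Rightarrow> zd \<Rightarrow> zd" where
  "zmul D x y = (fst x * fst y + D * snd x * snd y, fst x * snd y + snd x * fst y)"

definition zconj :: "zd \<Rightarrow> zd" where
  "zconj x = (fst x, - snd x)"

definition znorm :: "int \<Rightarrow> zd \<Rightarrow> int" where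
  "znorm D x = fst x ^ 2 - D * snd x ^ 2"

definition zunit :: "int \<Rightarrow> zd \<Rightarrow> bool" where
  "zunit D x \<longleftrightarrow> (\<exists>w. zmul D x w = (1, 0))"

definition zdvd :: "int \<Rightarrow> zd \<Rightarrow> zd \<Rightarrow> bool" where
  "zdvd D x y \<longleftrightarrow> (\<exists>w. y = zmul D x w)"

definition in_ideal2 :: "int \<Rightarrow> zd \<Rightarrow> bool" where
  "in_ideal2 D x \<longleftrightarrow> zdvd D (2, 0) x"

definition zirreducible :: "int \<Rightarrow> zd \<Rightarrow> bool" where
  "zirreducible D p \<longleftrightarrow> p \<noteq> (0, 0) \<and> \<not> zunit D p \<and>
     (\<forall>a b. p = zmul D a b \<longrightarrow> zunit D a \<or> zunit D b)"

definition zprime :: "int \<Rightarrow> zd \<Rightarrow> bool" where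
  "zprime D p \<longleftrightarrow> p \<noteq> (0, 0) \<and> \<not> zunit D p \<and>
     (\<forall>a b. zdvd D p (zmul D a b) \<longrightarrow> zdvd D p a \<or> zdvd D p b)"

definition I2 :: "int \<Rightarrow> zd set" where
  "I2 D = {z. \<not> zunit D z \<and> \<not> in_ideal2 D z \<and>
              (\<exists>m. \<not> in_ideal2 D m \<and> in_ideal2 D (zmul D z m))}"

text \<open>2x2 matrices over Z[sqrt D], as (entry11, entry12, entry21, entry22).\<close>
type_synonym zmat = "zd \<times> zd \<times> zd \<times> zd"

definition zmatmul :: "int \<Rightarrow> zmat \<Rightarrow> zmat \<Rightarrow> zmat" where
  "zmatmul D M N = (case M of (m11, m12, m21, m22) \<Rightarrow> case N of (n11, n12, n21, n22) \<Rightarrow>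
     (zadd (zmul D m11 n11) (zmul D m12 n21), zadd (zmul D m11 n12) (zmul D m12 n22),
      zadd (zmul D m21 n11) (zmul D m22 n21), zadd (zmul D m21 n12) (zmul D m22 n22)))"

definition A2 :: "int \<Rightarrow> zd \<Rightarrow> zmat" where
  "A2 D z = ((2, 0), z, zconj z, (znorm D z div 2, 0))"

definition CZ :: "int \<Rightarrow> zmat \<Rightarrow> bool" where
  "CZ D M \<longleftrightarrow> (\<exists>a b c. zmul D a (zsub (1, 0) a) = zmul D b c \<and>
     M = zmatmul D (a, b, c, zsub (1, 0) a)
                   (zconj a, zconj c, zconj b, zsub (1, 0) (zconj a)))"

end

theory Submission
  imports Defs
begin

text \<open>Write \<open>x'\<close> for the conjugate, \<open>N\<close> for the norm and \<open>M = [[a, b], [c, 1 - a]]\<close>.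
  If \<open>A(2,z)\<close> is \<open>M\<close> times its conjugate transpose and \<open>a(1 - a) = bc\<close>, then
  \<open>b z' = a' bc + (1 - a) N b = (1 - a)(N a + N b) = 2(1 - a)\<close>, so \<open>a\<close> is determined by \<open>b\<close>,
  and taking norms turns \<open>N a + N b = 2\<close> into the Diophantine equation for \<open>b = b1 + b2\<surd>D\<close>.
  Conversely, a solution \<open>b\<close> yields \<open>a = 1 - b z'/2\<close> and \<open>c = a z'/2\<close>, for which every entry of
  the product is an identity modulo \<open>N a + N b = 2\<close>. These halves are integral because
  \<open>D \<equiv> 2 (mod 4)\<close> and \<open>k\<close> odd force \<open>z1, b1\<close> even and \<open>z2, b2\<close> odd.\<close>

lemma zmatmul_factor_adjoint:
  assumes "w = zadd (zmul D a (zconj c)) (zmul D b (zsub (1, 0) (zconj a)))"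
  shows "zmatmul D (a, b, c, zsub (1, 0) a) (zconj a, zconj c, zconj b, zsub (1, 0) (zconj a)) =
    ((znorm D a + znorm D b, 0), w, zconj w, (znorm D c + znorm D (zsub (1, 0) a), 0))"
  using assms
  by (simp add: zmatmul_def zmul_def zadd_def zsub_def zconj_def znorm_def power2_eq_square
      algebra_simps)

lemma CZ_A2_iff:
  assumes "znorm D z = 2 * k"
  shows "CZ D (A2 D z) \<longleftrightarrow> (\<exists>a b c. zmul D a (zsub (1, 0) a) = zmul D b c \<and>
    znorm D a + znorm D b = 2 \<and>
    zadd (zmul D a (zconj c)) (zmul D b (zsub (1, 0) (zconj a))) = z \<and>
    znorm D c + znorm D (zsub (1, 0) a) = k)"
proof -
  have "A2 D z = ((2, 0), z, zconj z, (k, 0))"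
    using assms by (simp add: A2_def)
  then show ?thesis
    unfolding CZ_def zmatmul_factor_adjoint[OF refl] by (auto simp del: split_paired_Ex)
qed

lemma zmul_zconj_eq_double_complement:
  assumes "zmul D a (zsub (1, 0) a) = zmul D b c"
    and "znorm D a + znorm D b = 2"
    and "zadd (zmul D a (zconj c)) (zmul D b (zsub (1, 0) (zconj a))) = z"
  shows "zmul D b (zconj z) = zmul D (2, 0) (zsub (1, 0) a)"
proof -
  obtain a1 a2 b1 b2 c1 c2 where abc: "a = (a1, a2)" "b = (b1, b2)" "c = (c1, c2)"
    by (cases a, cases b, cases c)
  with assms have
    "a1 * (1 - a1) - D * a2 * a2 = b1 * c1 + D * b2 * c2"
    "a2 * (1 - a1) - a1 * a2 = b1 * c2 + b2 * c1"
    "a1^2 - D * a2^2 + (b1^2 - D * b2^2) = 2"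
    "fst z = a1 * c1 - D * a2 * c2 + (b1 * (1 - a1) + D * b2 * a2)"
    "snd z = a2 * c1 - a1 * c2 + (b1 * a2 + b2 * (1 - a1))"
    by (auto simp: zmul_def zadd_def zsub_def zconj_def znorm_def)
  then have "b1 * fst z - D * b2 * snd z = 2 - 2 * a1" "b2 * fst z - b1 * snd z = - 2 * a2"
    by algebra+
  then show ?thesis
    by (simp add: abc zmul_def zsub_def zconj_def)
qed

lemma znorm_sum_eq_two_iff:
  assumes "zmul D b (zconj z) = zmul D (2, 0) (zsub (1, 0) a)"
    and "znorm D z = 2 * k"
  shows "znorm D a + znorm D b = 2 \<longleftrightarrow> (2 + k) * znorm D b = 2 * fst (zmul D b (zconj z)) + 2"
proof -
  obtain a1 a2 b1 b2 z1 z2 where abz: "a = (a1, a2)" "b = (b1, b2)" "z = (z1, z2)"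
    by (cases a, cases b, cases z)
  with assms have
    "2 * a1 = 2 - (b1 * z1 - D * b2 * z2)" "2 * a2 = b1 * z2 - b2 * z1"
    "z1^2 - D * z2^2 = 2 * k"
    by (auto simp: zmul_def zsub_def zconj_def znorm_def)
  then have "4 * (znorm D a + znorm D b - 2) = 2 * ((2 + k) * znorm D b - 2 * (b1 * z1 - D * b2 * z2) - 2)"
    unfolding abz znorm_def fst_conv snd_conv by algebra
  then show ?thesis
    by (auto simp: abz zmul_def zconj_def)
qed

lemma CZ_conditions_from_halves:
  assumes "zmul D b (zconj z) = zmul D (2, 0) (zsub (1, 0) a)"
    and "zmul D a (zconj z) = zmul D (2, 0) c"
    and "znorm D a + znorm D b = 2"
    and "znorm D z = 2 * k"
  shows "zmul D a (zsub (1, 0) a) = zmul D b c"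
    and "zadd (zmul D a (zconj c)) (zmul D b (zsub (1, 0) (zconj a))) = z"
    and "znorm D c + znorm D (zsub (1, 0) a) = k"
proof -
  obtain a1 a2 b1 b2 c1 c2 z1 z2 where abcz: "a = (a1, a2)" "b = (b1, b2)" "c = (c1, c2)" "z = (z1, z2)"
    by (cases a, cases b, cases c, cases z)
  with assms have h:
    "2 * a1 = 2 - (b1 * z1 - D * b2 * z2)" "2 * a2 = b1 * z2 - b2 * z1"
    "2 * c1 = a1 * z1 - D * a2 * z2" "2 * c2 = a2 * z1 - a1 * z2"
    "a1^2 - D * a2^2 + (b1^2 - D * b2^2) = 2"
    "z1^2 - D * z2^2 = 2 * k"
    by (auto simp: zmul_def zsub_def zconj_def znorm_def)
  then have "a1 * (1 - a1) - D * a2 * a2 = b1 * c1 + D * b2 * c2"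
      "a2 * (1 - a1) - a1 * a2 = b1 * c2 + b2 * c1"
    by algebra+
  then show "zmul D a (zsub (1, 0) a) = zmul D b c"
    by (simp add: abcz zmul_def zsub_def algebra_simps)
  from h have "a1 * c1 - D * a2 * c2 + (b1 * (1 - a1) + D * b2 * a2) = z1"
      "a2 * c1 - a1 * c2 + (b1 * a2 + b2 * (1 - a1)) = z2"
    by algebra+
  then show "zadd (zmul D a (zconj c)) (zmul D b (zsub (1, 0) (zconj a))) = z"
    by (simp add: abcz zmul_def zadd_def zsub_def zconj_def algebra_simps)
  from h have "4 * (c1^2 - D * c2^2 + ((1 - a1)^2 - D * a2^2)) = 4 * k"
    by algebra
  then show "znorm D c + znorm D (zsub (1, 0) a) = k"
    by (simp add: abcz znorm_def zsub_def)
qed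

lemma parity_of_znorm_twice_odd:
  assumes "D mod 4 = 2" and "znorm D z = 2 * k" and "odd k"
  shows "even (fst z)" and "odd (snd z)"
proof -
  obtain z1 z2 where z: "z = (z1, z2)" by (cases z)
  have "even D" using assms(1) by presburger
  moreover have "z1^2 = 2 * k + D * z2^2"
    using assms(2) by (simp add: z znorm_def)
  ultimately have "even (z1^2)" by simp
  then show "even (fst z)" by (simp add: z)
  then obtain w where w: "z1 = 2 * w" by (auto simp: z)
  show "odd (snd z)"
  proof
    assume "even (snd z)"
    then obtain f where "z2 = 2 * f" by (auto simp: z)
    with w assms(2) have "k = 2 * (w^2 - D * f^2)"
      by (simp add: z znorm_def power2_eq_square algebra_simps)
    with assms(3) show False by simp
  qed
qed

lemma parity_of_solution:
  assumes "D mod 4 = 2" and "odd k" and "even (fst z)"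
    and "(2 + k) * znorm D b = 2 * fst (zmul D b (zconj z)) + 2"
  shows "even (fst b)" and "odd (snd b)"
proof -
  obtain b1 b2 z1 z2 where bz: "b = (b1, b2)" "z = (z1, z2)" by (cases b, cases z)
  obtain d where d: "D = 4 * d + 2" using assms(1) by (metis div_mult_mod_eq mult.commute)
  obtain w where w: "z1 = 2 * w" using assms(3) by (auto simp: bz)
  have eq: "(2 + k) * (b1^2 - D * b2^2) = 2 * (b1 * z1 - D * b2 * z2) + 2"
    using assms(4) by (simp add: bz znorm_def zmul_def zconj_def)
  then have "even ((2 + k) * (b1^2 - D * b2^2))" by simp
  with assms(2) d show "even (fst b)" by (simp add: bz)
  then obtain g where g: "b1 = 2 * g" by (auto simp: bz)
  from eq have "(2 + k) * (2 * g^2 - (2 * d + 1) * b2^2) = 2 * (2 * g * w - (2 * d + 1) * b2 * z2) + 1"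
    unfolding g w d by algebra
  then have "odd ((2 + k) * (2 * g^2 - (2 * d + 1) * b2^2))" by simp
  then show "odd (snd b)" by (simp add: bz)
qed

lemma CZ_halves_exist:
  assumes "D mod 4 = 2"
    and "even (fst z)" and "odd (snd z)" and "even (fst b)" and "odd (snd b)"
  obtains a c where "zmul D b (zconj z) = zmul D (2, 0) (zsub (1, 0) a)"
    and "zmul D a (zconj z) = zmul D (2, 0) c"
proof -
  obtain d where d: "D = 4 * d + 2" using assms(1) by (metis div_mult_mod_eq mult.commute)
  obtain w f where z: "z = (2 * w, 2 * f + 1)"
    using assms(2,3) by (metis evenE oddE prod.collapse)
  obtain g e where b: "b = (2 * g, 2 * e + 1)"
    using assms(4,5) by (metis evenE oddE prod.collapse)
  \<comment> \<open>\<open>(a1, a2) = 1 - b z'/2\<close> and \<open>c = a z'/2\<close>, written out\<close>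
  define a1 where "a1 = 1 - 2 * g * w + (2 * d + 1) * (2 * e + 1) * (2 * f + 1)"
  define a2 where "a2 = g * (2 * f + 1) - (2 * e + 1) * w"
  have "even a1" by (simp add: a1_def)
  then obtain h where h: "a1 = 2 * h" by (rule evenE)
  define c where "c = (a1 * w - (2 * d + 1) * a2 * (2 * f + 1), a2 * w - h * (2 * f + 1))"
  show thesis
  proof (rule that[of "(a1, a2)" c])
    show "zmul D b (zconj z) = zmul D (2, 0) (zsub (1, 0) (a1, a2))"
      by (simp add: b z d a1_def a2_def zmul_def zconj_def zsub_def algebra_simps)
    show "zmul D (a1, a2) (zconj z) = zmul D (2, 0) c"
      by (simp add: z d h c_def zmul_def zconj_def algebra_simps)
  qed
qed

theorem corollary3p3:
  fixes D k :: int and z :: zd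
  assumes "squarefree D"
    and "D mod 4 = 2"
    and "zirreducible D (2, 0)"
    and "\<not> zprime D (2, 0)"
    and "z \<in> I2 D"
    and "znorm D z = 2 * k"
    and "k mod 4 = 3"
  shows "CZ D (A2 D z) \<longleftrightarrow>
    (\<exists>b1 b2 :: int. 0 = (2 + k) * b1 ^ 2 - (2 + k) * D * b2 ^ 2
                          - 2 * fst z * b1 + 2 * snd z * D * b2 - 2)"
proof -
  have "odd k" using assms(7) by presburger
  have "CZ D (A2 D z) \<longleftrightarrow> (\<exists>b. (2 + k) * znorm D b = 2 * fst (zmul D b (zconj z)) + 2)"
  proof
    assume "CZ D (A2 D z)"
    then obtain a b c where "zmul D a (zsub (1, 0) a) = zmul D b c" "znorm D a + znorm D b = 2"
        "zadd (zmul D a (zconj c)) (zmul D b (zsub (1, 0) (zconj a))) = z"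
      using CZ_A2_iff[OF assms(6)] by blast
    then show "\<exists>b. (2 + k) * znorm D b = 2 * fst (zmul D b (zconj z)) + 2"
      using znorm_sum_eq_two_iff[OF zmul_zconj_eq_double_complement assms(6)] by blast
  next
    assume "\<exists>b. (2 + k) * znorm D b = 2 * fst (zmul D b (zconj z)) + 2"
    then obtain b where b: "(2 + k) * znorm D b = 2 * fst (zmul D b (zconj z)) + 2" ..
    note z_parity = parity_of_znorm_twice_odd[OF assms(2,6) \<open>odd k\<close>]
    note b_parity = parity_of_solution[OF assms(2) \<open>odd k\<close> z_parity(1) b]
    obtain a c where a: "zmul D b (zconj z) = zmul D (2, 0) (zsub (1, 0) a)"
        and c: "zmul D a (zconj z) = zmul D (2, 0) c"
      using CZ_halves_exist[OF assms(2) z_parity b_parity] .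
    have "znorm D a + znorm D b = 2"
      using znorm_sum_eq_two_iff[OF a assms(6)] b by blast
    then show "CZ D (A2 D z)"
      using CZ_A2_iff[OF assms(6)] CZ_conditions_from_halves[OF a c _ assms(6)] by blast
  qed
  moreover have "(2 + k) * znorm D (b1, b2) = 2 * fst (zmul D (b1, b2) (zconj z)) + 2 \<longleftrightarrow>
      0 = (2 + k) * b1 ^ 2 - (2 + k) * D * b2 ^ 2 - 2 * fst z * b1 + 2 * snd z * D * b2 - 2"
    for b1 b2
    by (auto simp: znorm_def zmul_def zconj_def algebra_simps)
  ultimately show ?thesis by simp
qed

end
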